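(* Let $\Gamma$ and $G$ be topological groups, $A$ a tree, and $\mathcal I$ a cellular $(\Gamma,A)$-groupoid. Then the map $\kappa\colon\mathrm{Rep}^G_{\mathrm{cell}}(\mathcal I)\to\overline{\mathrm{Rep}}^{\,G}_{\mathrm{cell}}(\mathcal I)$ is surjective.
   Context: A tree is a contractible graph (1-dimensional CW-complex). A $(\Gamma,A)$-groupoid: subspace $\mathcal I\subset\Gamma\times A$ with $\mathcal I\cap(\Gamma\times\{a\})=\tilde{\mathcal I}_a\times\{a\}$, $\tilde{\mathcal I}_a$ closed subgroups (identified with $\mathcal I_a$). $e(a)$: cell whose open cell contains $a$. Cellular: $\mathcal I_a=\mathcal I_b$ when $e(a)=e(b)$ (written $\mathcal I(e)$), and locally maximal (each $a$ and neighbourhood $B$ admit open $U$, $a\in U\subset B$, homotopy $\rho_t\colon U\to U$, $\rho_0=\mathrm{id}$, $\rho_1\equiv a$, $\mathcal I_u\subset\mathcal I_{\rho_t(u)}$); thus $\mathcal I(e)\subset\mathcal I(v)$ for a vertex $v$ of an edge $e$. A cellular representation is a continuous $\beta\colon\mathcal I\to G$, homomorphism on each $\mathcal I_a$, with $\beta_a=\beta_b$ when $e(a)=e(b)$; $\mathrm{Rep}^G_{\mathrm{cell}}(\mathcal I)$ is the set of these modulo conjugation by a constant $g\in G$. $\overline{\mathrm{Rep}}^{\,G}_{\mathrm{cell}}(\mathcal I)$: families $(b_e)$ over cells with $b_e$ a $G$-conjugacy class of continuous homomorphisms $\mathcal I(e)\to G$ and $b_e=b_v|_{\mathcal I(e)}$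 for each vertex $v$ of each edge $e$. $\kappa$ sends $\beta$ to $([\beta_e])_e$. *)

theory Defs
  imports "HOL-Analysis.Analysis" "HOL-Algebra.Group" "HOL-Library.FuncSet"
begin

definition topological_group :: "'g monoid \<Rightarrow> 'g topology \<Rightarrow> bool" where
  "topological_group Gr T \<longleftrightarrow>
     group Gr \<and> topspace T = carrier Gr \<and>
     continuous_map (prod_topology T T) T (\<lambda>p. fst p \<otimes>\<^bsub>Gr\<^esub> snd p) \<and>
     continuous_map T T (\<lambda>x. inv\<^bsub>Gr\<^esub> x)"

text \<open>A graph is given by a vertex set V, an edge set E and endpoint maps src, tgt.
  Points of its geometric realization: vertices, and interior points (e,t), 0<t<1, of edges.\<close>
datatype ('v, 'e) gpoint = Vert 'v | Mid 'e real

datatype ('v, 'e) cell = VCell 'v | ECell 'e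

definition gpoints :: "'v set \<Rightarrow> 'e set \<Rightarrow> ('v, 'e) gpoint set" where
  "gpoints V E = Vert ` V \<union> {Mid e t | e t. e \<in> E \<and> 0 < t \<and> t < 1}"

definition cells :: "'v set \<Rightarrow> 'e set \<Rightarrow> ('v, 'e) cell set" where
  "cells V E = VCell ` V \<union> ECell ` E"

fun cell_of :: "('v, 'e) gpoint \<Rightarrow> ('v, 'e) cell" where
  "cell_of (Vert v) = VCell v"
| "cell_of (Mid e t) = ECell e"

fun cell_pt :: "('v, 'e) cell \<Rightarrow> ('v, 'e) gpoint" where
  "cell_pt (VCell v) = Vert v"
| "cell_pt (ECell e) = Mid e (1/2)"

definition char_map :: "('e \<Rightarrow> 'v) \<Rightarrow> ('e \<Rightarrow> 'v) \<Rightarrow> 'e \<Rightarrow> real \<Rightarrow> ('v, 'e) gpoint" where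
  "char_map src tgt e t = (if t = 0 then Vert (src e) else if t = 1 then Vert (tgt e) else Mid e t)"

text \<open>The CW (weak) topology: U is open iff its preimage under each characteristic map is open
  in [0,1].\<close>
definition realization :: "'v set \<Rightarrow> 'e set \<Rightarrow> ('e \<Rightarrow> 'v) \<Rightarrow> ('e \<Rightarrow> 'v) \<Rightarrow> ('v, 'e) gpoint topology" where
  "realization V E src tgt = topology (\<lambda>U. U \<subseteq> gpoints V E \<and>
      (\<forall>e\<in>E. openin (top_of_set {0..1::real}) ({0..1} \<inter> char_map src tgt e -` U)))"

definition tree_graph :: "'v set \<Rightarrow> 'e set \<Rightarrow> ('e \<Rightarrow> 'v) \<Rightarrow> ('e \<Rightarrow> 'v) \<Rightarrow> bool" where
  "tree_graph V E src tgt \<longleftrightarrow>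
     (\<forall>e\<in>E. src e \<in> V \<and> tgt e \<in> V) \<and> contractible_space (realization V E src tgt)"

definition fib :: "('g \<times> 'p) set \<Rightarrow> 'p \<Rightarrow> 'g set" where
  "fib I a = {x. (x, a) \<in> I}"

definition groupoid :: "'g monoid \<Rightarrow> 'g topology \<Rightarrow> 'v set \<Rightarrow> 'e set \<Rightarrow> ('g \<times> ('v,'e) gpoint) set \<Rightarrow> bool" where
  "groupoid Gam TGam V E I \<longleftrightarrow>
     I \<subseteq> carrier Gam \<times> gpoints V E \<and>
     (\<forall>a\<in>gpoints V E. subgroup (fib I a) Gam \<and> closedin TGam (fib I a))"

definition locally_maximal ::
  "'v set \<Rightarrow> 'e set \<Rightarrow> ('e \<Rightarrow> 'v) \<Rightarrow> ('e \<Rightarrow> 'v) \<Rightarrow> ('g \<times> ('v,'e) gpoint) set \<Rightarrow> bool" where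
  "locally_maximal V E src tgt I \<longleftrightarrow>
     (\<forall>a\<in>gpoints V E. \<forall>B. (\<exists>W. openin (realization V E src tgt) W \<and> a \<in> W \<and> W \<subseteq> B) \<longrightarrow>
        (\<exists>U \<rho>. openin (realization V E src tgt) U \<and> a \<in> U \<and> U \<subseteq> B \<and>
           continuous_map (prod_topology (top_of_set {0..1::real}) (subtopology (realization V E src tgt) U))
                          (subtopology (realization V E src tgt) U) \<rho> \<and>
           (\<forall>u\<in>U. \<rho> (0, u) = u \<and> \<rho> (1, u) = a) \<and>
           (\<forall>t\<in>{0..1}. \<forall>u\<in>U. fib I u \<subseteq> fib I (\<rho> (t, u)))))"

definition cellular_groupoid ::
  "'g monoid \<Rightarrow> 'g topology \<Rightarrow> 'v set \<Rightarrow> 'e set \<Rightarrow> ('e \<Rightarrow> 'v) \<Rightarrow> ('e \<Rightarrow> 'v) \<Rightarrow> ('g \<times> ('v,'e) gpoint) set \<Rightarrow> bool" where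
  "cellular_groupoid Gam TGam V E src tgt I \<longleftrightarrow>
     groupoid Gam TGam V E I \<and>
     (\<forall>a\<in>gpoints V E. \<forall>b\<in>gpoints V E. cell_of a = cell_of b \<longrightarrow> fib I a = fib I b) \<and>
     locally_maximal V E src tgt I"

definition Icell :: "('g \<times> ('v,'e) gpoint) set \<Rightarrow> ('v,'e) cell \<Rightarrow> 'g set" where
  "Icell I c = fib I (cell_pt c)"

definition cellular_rep ::
  "'g monoid \<Rightarrow> 'g topology \<Rightarrow> 'h monoid \<Rightarrow> 'h topology \<Rightarrow> 'v set \<Rightarrow> 'e set \<Rightarrow> ('e \<Rightarrow> 'v) \<Rightarrow> ('e \<Rightarrow> 'v)
    \<Rightarrow> ('g \<times> ('v,'e) gpoint) set \<Rightarrow> ('g \<times> ('v,'e) gpoint \<Rightarrow> 'h) \<Rightarrow> bool" where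
  "cellular_rep Gam TGam G TG V E src tgt I \<beta> \<longleftrightarrow>
     \<beta> \<in> extensional I \<and>
     continuous_map (subtopology (prod_topology TGam (realization V E src tgt)) I) TG \<beta> \<and>
     (\<forall>a\<in>gpoints V E. (\<lambda>x. \<beta> (x, a)) \<in> hom (Gam\<lparr>carrier := fib I a\<rparr>) G) \<and>
     (\<forall>a\<in>gpoints V E. \<forall>b\<in>gpoints V E. \<forall>x. cell_of a = cell_of b \<longrightarrow> x \<in> fib I a \<longrightarrow> \<beta> (x, a) = \<beta> (x, b))"

definition rep_class :: "'h monoid \<Rightarrow> ('g \<times> 'p) set \<Rightarrow> ('g \<times> 'p \<Rightarrow> 'h) \<Rightarrow> ('g \<times> 'p \<Rightarrow> 'h) set" where
  "rep_class G I \<beta> = {(\<lambda>p\<in>I. g \<otimes>\<^bsub>G\<^esub> \<beta> p \<otimes>\<^bsub>G\<^esub> inv\<^bsub>G\<^esub> g) | g. g \<in> carrier G}"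

definition Rep_cellular ::
  "'g monoid \<Rightarrow> 'g topology \<Rightarrow> 'h monoid \<Rightarrow> 'h topology \<Rightarrow> 'v set \<Rightarrow> 'e set \<Rightarrow> ('e \<Rightarrow> 'v) \<Rightarrow> ('e \<Rightarrow> 'v)
    \<Rightarrow> ('g \<times> ('v,'e) gpoint) set \<Rightarrow> ('g \<times> ('v,'e) gpoint \<Rightarrow> 'h) set set" where
  "Rep_cellular Gam TGam G TG V E src tgt I =
     rep_class G I ` {\<beta>. cellular_rep Gam TGam G TG V E src tgt I \<beta>}"

definition cont_homs :: "'g monoid \<Rightarrow> 'g topology \<Rightarrow> 'h monoid \<Rightarrow> 'h topology \<Rightarrow> 'g set \<Rightarrow> ('g \<Rightarrow> 'h) set" where
  "cont_homs Gam TGam G TG H =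
     {\<phi>. \<phi> \<in> extensional H \<and> \<phi> \<in> hom (Gam\<lparr>carrier := H\<rparr>) G \<and> continuous_map (subtopology TGam H) TG \<phi>}"

definition hom_class :: "'h monoid \<Rightarrow> 'g set \<Rightarrow> ('g \<Rightarrow> 'h) \<Rightarrow> ('g \<Rightarrow> 'h) set" where
  "hom_class G H \<phi> = {(\<lambda>x\<in>H. g \<otimes>\<^bsub>G\<^esub> \<phi> x \<otimes>\<^bsub>G\<^esub> inv\<^bsub>G\<^esub> g) | g. g \<in> carrier G}"

definition Rep_bar ::
  "'g monoid \<Rightarrow> 'g topology \<Rightarrow> 'h monoid \<Rightarrow> 'h topology \<Rightarrow> 'v set \<Rightarrow> 'e set \<Rightarrow> ('e \<Rightarrow> 'v) \<Rightarrow> ('e \<Rightarrow> 'v)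
    \<Rightarrow> ('g \<times> ('v,'e) gpoint) set \<Rightarrow> (('v,'e) cell \<Rightarrow> ('g \<Rightarrow> 'h) set) set" where
  "Rep_bar Gam TGam G TG V E src tgt I =
     {b. b \<in> extensional (cells V E) \<and>
         (\<forall>c\<in>cells V E. \<exists>\<phi>\<in>cont_homs Gam TGam G TG (Icell I c). b c = hom_class G (Icell I c) \<phi>) \<and>
         (\<forall>e\<in>E. \<forall>v\<in>{src e, tgt e}.
             b (ECell e) = (\<lambda>\<phi>. restrict \<phi> (Icell I (ECell e))) ` b (VCell v))}"

definition kappa_rep ::
  "'h monoid \<Rightarrow> 'v set \<Rightarrow> 'e set \<Rightarrow> ('g \<times> ('v,'e) gpoint) set \<Rightarrow> ('g \<times> ('v,'e) gpoint \<Rightarrow> 'h)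
    \<Rightarrow> (('v,'e) cell \<Rightarrow> ('g \<Rightarrow> 'h) set)" where
  "kappa_rep G V E I \<beta> = (\<lambda>c\<in>cells V E. hom_class G (Icell I c) (\<lambda>x. \<beta> (x, cell_pt c)))"

definition kappa ::
  "'h monoid \<Rightarrow> 'v set \<Rightarrow> 'e set \<Rightarrow> ('g \<times> ('v,'e) gpoint) set \<Rightarrow> ('g \<times> ('v,'e) gpoint \<Rightarrow> 'h) set
    \<Rightarrow> (('v,'e) cell \<Rightarrow> ('g \<Rightarrow> 'h) set)" where
  "kappa G V E I X = the_elem (kappa_rep G V E I ` X)"

end

theory Submission
  imports Defs "HOL-Complex_Analysis.Winding_Numbers"
begin

text \<open>Choose for every vertex v a representative \<open>\<Phi> v\<close> of the class at v such that along each
  edge e the homomorphisms \<open>\<Phi> (src e)\<close> and \<open>\<Phi> (tgt e)\<close> agree on \<open>I(e)\<close>. On a tree such a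
  choice exists: by Zorn's lemma there is a maximal compatible choice on a connected set of vertices,
  and it extends across any edge leaving that set, because every edge of a tree separates it, so the
  new vertex is joined to the old set by this edge alone. That edges separate is seen topologically:
  a path around an edge e would close up to a loop which the map wrapping e once around the unit
  circle (and collapsing everything else) sends to a loop of winding number 1, impossible in a
  contractible space. The representation takes at a point of a cell the value of the representative at
  an adjacent vertex. On the open star of each cell it is a continuous homomorphism of \<open>I(c)\<close> composed
  with the projection to Gamma, using \<open>I(e) \<subseteq> I(v)\<close> from local maximality; hence it is continuous,
  and \<open>\<kappa>\<close> maps its class to the given family.\<close>

section \<open>The topology of the realization\<close>

lemma openin_realization:
  "openin (realization V E src tgt) U \<longleftrightarrow> U \<subseteq> gpoints V E \<and>
      (\<forall>e\<in>E. openin (top_of_set {0..1::real}) ({0..1} \<inter> char_map src tgt e -` U))"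
proof -
  have "istopology (\<lambda>U. U \<subseteq> gpoints V E \<and>
      (\<forall>e\<in>E. openin (top_of_set {0..1::real}) ({0..1} \<inter> char_map src tgt e -` U)))"
    unfolding istopology_def
  proof (intro conjI allI impI ballI)
    fix S T e
    assume "S \<subseteq> gpoints V E \<and> (\<forall>e\<in>E. openin (top_of_set {0..1}) ({0..1} \<inter> char_map src tgt e -` S))"
      and "T \<subseteq> gpoints V E \<and> (\<forall>e\<in>E. openin (top_of_set {0..1}) ({0..1} \<inter> char_map src tgt e -` T))"
      and "e \<in> E"
    then have "openin (top_of_set {0..1})
        (({0..1} \<inter> char_map src tgt e -` S) \<inter> ({0..1} \<inter> char_map src tgt e -` T))"
      by (blast intro: openin_Int)
    then show "openin (top_of_set {0..1}) ({0..1} \<inter> char_map src tgt e -` (S \<inter> T))"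
      by (simp add: Int_ac vimage_Int)
  next
    fix K e
    assume K: "\<forall>S\<in>K. S \<subseteq> gpoints V E \<and> (\<forall>e\<in>E. openin (top_of_set {0..1}) ({0..1} \<inter> char_map src tgt e -` S))"
      and "e \<in> E"
    then have "openin (top_of_set {0..1}) (\<Union>S\<in>K. {0..1} \<inter> char_map src tgt e -` S)"
      by (intro openin_Union) auto
    moreover have "(\<Union>S\<in>K. {0..1} \<inter> char_map src tgt e -` S) = {0..1} \<inter> char_map src tgt e -` \<Union>K"
      by auto
    ultimately show "openin (top_of_set {0..1}) ({0..1} \<inter> char_map src tgt e -` \<Union>K)"
      by simp
  qed auto
  then show ?thesis
    unfolding realization_def by (simp add: topology_inverse')
qed

lemma char_map_in_gpoints:
  assumes "src e \<in> V" "tgt e \<in> V" "e \<in> E" "t \<in> {0..1}"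
  shows "char_map src tgt e t \<in> gpoints V E"
  using assms by (auto simp: char_map_def gpoints_def)

lemma topspace_realization:
  assumes "\<forall>e\<in>E. src e \<in> V \<and> tgt e \<in> V"
  shows "topspace (realization V E src tgt) = gpoints V E"
proof -
  have "{0..1} \<inter> char_map src tgt e -` gpoints V E = {0..1}" if "e \<in> E" for e
    using assms that char_map_in_gpoints[of src e V tgt E] by auto
  then have "openin (realization V E src tgt) (gpoints V E)"
    by (simp add: openin_realization)
  then have "gpoints V E \<subseteq> topspace (realization V E src tgt)"
    by (rule openin_subset)
  moreover have "topspace (realization V E src tgt) \<subseteq> gpoints V E"
    using openin_topspace[of "realization V E src tgt"] by (simp only: openin_realization)
  ultimately show ?thesis
    by blast
qed

lemma continuous_map_char_map:
  assumes "\<forall>e\<in>E. src e \<in> V \<and> tgt e \<in> V" "e \<in> E"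
  shows "continuous_map (top_of_set {0..1}) (realization V E src tgt) (char_map src tgt e)"
  unfolding continuous_map_def
proof (intro conjI allI impI)
  show "char_map src tgt e \<in> topspace (top_of_set {0..1}) \<rightarrow> topspace (realization V E src tgt)"
    using assms char_map_in_gpoints[of src e V tgt E] by (auto simp: topspace_realization)
  fix U assume "openin (realization V E src tgt) U"
  then have "openin (top_of_set {0..1::real}) ({0..1} \<inter> char_map src tgt e -` U)"
    using assms by (auto simp: openin_realization)
  moreover have "{x \<in> topspace (top_of_set {0..1::real}). char_map src tgt e x \<in> U}
      = {0..1} \<inter> char_map src tgt e -` U"
    by auto
  ultimately show "openin (top_of_set {0..1})
      {x \<in> topspace (top_of_set {0..1::real}). char_map src tgt e x \<in> U}"
    by simp
qed

lemma continuous_map_from_realization: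
  assumes "\<forall>e\<in>E. src e \<in> V \<and> tgt e \<in> V"
    and "\<And>e. e \<in> E \<Longrightarrow> continuous_map (top_of_set {0..1}) Y (g \<circ> char_map src tgt e)"
    and "g \<in> gpoints V E \<rightarrow> topspace Y"
  shows "continuous_map (realization V E src tgt) Y g"
  unfolding continuous_map_def
proof (intro conjI allI impI)
  show "g \<in> topspace (realization V E src tgt) \<rightarrow> topspace Y"
    using assms by (simp add: topspace_realization)
  fix U assume U: "openin Y U"
  show "openin (realization V E src tgt) {x \<in> topspace (realization V E src tgt). g x \<in> U}"
    unfolding openin_realization topspace_realization[OF assms(1)]
  proof (intro conjI ballI)
    fix e assume e: "e \<in> E"
    have "openin (top_of_set {0..1})
        {x \<in> topspace (top_of_set {0..1::real}). (g \<circ> char_map src tgt e) x \<in> U}"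
      using assms(2)[OF e] U by (simp add: continuous_map_def)
    moreover have "{x \<in> topspace (top_of_set {0..1::real}). (g \<circ> char_map src tgt e) x \<in> U}
        = {0..1} \<inter> char_map src tgt e -` {x \<in> gpoints V E. g x \<in> U}"
      using char_map_in_gpoints[of src e V tgt E] assms(1) e by auto
    ultimately show "openin (top_of_set {0..1})
        ({0..1} \<inter> char_map src tgt e -` {x \<in> gpoints V E. g x \<in> U})"
      by simp
  qed auto
qed

section \<open>Connectedness of trees and separating edges\<close>

lemma pathin_join:
  assumes "pathin X g1" and "pathin X g2" and "g1 1 = g2 0"
  shows "pathin X (\<lambda>t. if t \<le> 1/2 then g1 (2 * t) else g2 (2 * t - 1))"
proof -
  let ?T01 = "top_of_set {0..1::real}"
  have g: "continuous_map ?T01 X g1" "continuous_map ?T01 X g2"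
    using assms by (simp_all add: pathin_def)
  have "continuous_map ?T01 X
      (\<lambda>t. if t \<le> 1/2 then (g1 \<circ> (\<lambda>t. 2 * t)) t else (g2 \<circ> (\<lambda>t. 2 * t - 1)) t)"
  proof (intro continuous_map_cases_le continuous_map_compose, force, force)
    show "continuous_map (subtopology ?T01 {x \<in> topspace ?T01. x \<le> 1/2}) ?T01 ((*) 2)"
      by (auto simp: continuous_map_in_subtopology continuous_map_from_subtopology)
    have "continuous_map (subtopology ?T01 {x. 0 \<le> x \<and> x \<le> 1 \<and> 1 \<le> x * 2})
        euclideanreal (\<lambda>t. 2 * t - 1)"
      by (intro continuous_intros) (force intro: continuous_map_from_subtopology)
    then show "continuous_map (subtopology ?T01 {x \<in> topspace ?T01. 1/2 \<le> x}) ?T01 (\<lambda>t. 2 * t - 1)"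
      by (force simp: continuous_map_in_subtopology)
  qed (use g assms(3) in \<open>auto simp: mult.commute\<close>)
  then show ?thesis
    unfolding pathin_def comp_def by simp
qed

lemma winding_number_loop_in_contractible_space:
  assumes X: "contractible_space X"
    and f: "continuous_map X (top_of_set (-{0})) f"
    and \<gamma>: "pathin X \<gamma>" "\<gamma> 1 = \<gamma> 0"
  shows "winding_number (f \<circ> \<gamma>) 0 = 0"
proof -
  obtain c where "homotopic_with (\<lambda>h. True) X (top_of_set (-{0})) f (\<lambda>x. c)"
    using nullhomotopic_from_contractible_space[OF f X] .
  then have hom: "homotopic_with (\<lambda>h. h (\<gamma> 1) = h (\<gamma> 0)) X (top_of_set (-{0})) f (\<lambda>x. c)"
    by (rule homotopic_with_mono) (simp add: \<gamma>(2))
  have "homotopic_loops (-{0}) (f \<circ> \<gamma>) ((\<lambda>x. c) \<circ> \<gamma>)"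
    unfolding homotopic_loops_def
    by (rule homotopic_with_compose_continuous_map_right[OF hom])
      (use \<gamma> in \<open>auto simp: pathin_def pathfinish_def pathstart_def\<close>)
  then have "winding_number (f \<circ> \<gamma>) 0 = winding_number (\<lambda>x. c) 0"
    by (simp add: winding_number_homotopic_loops)
  moreover have "c \<noteq> 0"
    using homotopic_with_imp_continuous_maps[OF hom] path_start_in_topspace[OF \<gamma>(1)]
    by (auto simp: continuous_map_def)
  ultimately show ?thesis
    by (simp add: winding_number_constI)
qed

definition edge_circle :: "'e \<Rightarrow> ('v, 'e) gpoint \<Rightarrow> complex" where
  "edge_circle e0 x = (case x of Vert v \<Rightarrow> 1 | Mid e t \<Rightarrow> if e = e0 then circlepath 0 1 t else 1)"

lemma continuous_map_edge_circle:
  assumes ends: "\<forall>e\<in>E. src e \<in> V \<and> tgt e \<in> V"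
  shows "continuous_map (realization V E src tgt) (top_of_set (-{0})) (edge_circle e0)"
proof -
  have circle_ends: "circlepath 0 1 0 = 1" "circlepath 0 1 1 = 1"
    by (simp_all add: circlepath)
  have "continuous_map (realization V E src tgt) euclidean (edge_circle e0)"
  proof (rule continuous_map_from_realization[OF ends])
    fix e assume "e \<in> E"
    have "continuous_on {0..1} (if e = e0 then circlepath 0 1 else (\<lambda>t. 1))"
      using path_circlepath unfolding path_def by simp
    moreover have "(if e = e0 then circlepath 0 1 else (\<lambda>t. 1)) t = (edge_circle e0 \<circ> char_map src tgt e) t"
      if "t \<in> {0..1}" for t
      using that circle_ends by (auto simp: edge_circle_def char_map_def)
    ultimately have "continuous_on {0..1} (edge_circle e0 \<circ> char_map src tgt e)"
      by (rule continuous_on_eq) simp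
    then show "continuous_map (top_of_set {0..1}) euclidean (edge_circle e0 \<circ> char_map src tgt e)"
      by simp
  qed simp
  moreover have "edge_circle e0 \<in> topspace (realization V E src tgt) \<rightarrow> -{0}"
    by (auto simp: edge_circle_def circlepath split: gpoint.splits)
  ultimately show ?thesis
    by (simp add: continuous_map_in_subtopology)
qed

lemma tree_no_path_around_edge:
  assumes tree: "tree_graph V E src tgt" and e0: "e0 \<in> E"
    and p: "pathin (subtopology (realization V E src tgt) (gpoints V E - range (Mid e0))) p"
    and p_ends: "p 0 = Vert (tgt e0)" "p 1 = Vert (src e0)"
  shows False
proof -
  have ends: "\<forall>e\<in>E. src e \<in> V \<and> tgt e \<in> V"
    and contr: "contractible_space (realization V E src tgt)"
    using tree by (auto simp: tree_graph_def)
  define \<gamma> where "\<gamma> t = (if t \<le> 1/2 then char_map src tgt e0 (2 * t) else p (2 * t - 1))" for t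
  have "pathin (realization V E src tgt) (char_map src tgt e0)"
    using continuous_map_char_map[OF ends e0] by (simp add: pathin_def)
  moreover have "pathin (realization V E src tgt) p"
    using p by (simp add: pathin_subtopology)
  ultimately have "pathin (realization V E src tgt) \<gamma>"
    unfolding \<gamma>_def by (rule pathin_join) (simp add: char_map_def p_ends)
  then have null: "winding_number (edge_circle e0 \<circ> \<gamma>) 0 = 0"
    using winding_number_loop_in_contractible_space[OF contr continuous_map_edge_circle[OF ends]]
    by (simp add: \<gamma>_def char_map_def p_ends)
  have edge_loop: "edge_circle e0 (char_map src tgt e0 s) = circlepath 0 1 s" for s
    by (simp add: edge_circle_def char_map_def circlepath)
  have agree: "(edge_circle e0 \<circ> \<gamma>) t = (circlepath 0 1 +++ linepath 1 1) t" if "t \<in> {0..1}" for t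
  proof (cases "t \<le> 1/2")
    case True
    then show ?thesis
      by (simp add: \<gamma>_def joinpaths_def edge_loop)
  next
    case False
    then have "p (2 * t - 1) \<notin> range (Mid e0)"
      using p that by (auto simp: pathin_subtopology)
    then show ?thesis
      using False by (auto simp: \<gamma>_def joinpaths_def edge_circle_def linepath_def split: gpoint.splits)
  qed
  have "winding_number (edge_circle e0 \<circ> \<gamma>) 0 = winding_number (circlepath 0 1 +++ linepath 1 1) 0"
    using agree by (intro winding_number_cong) auto
  also have "\<dots> = winding_number (circlepath 0 1) 0 + winding_number (linepath 1 1) 0"
    by (rule winding_number_join) auto
  also have "\<dots> = 1"
    by (simp add: winding_number_circlepath_centre)
  finally show False
    using null by simp
qed

definition every_edge_separates :: "'e set \<Rightarrow> ('e \<Rightarrow> 'v) \<Rightarrow> ('e \<Rightarrow> 'v) \<Rightarrow> bool" where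
  "every_edge_separates E src tgt \<longleftrightarrow>
     (\<forall>e0\<in>E. \<exists>A. src e0 \<in> A \<and> tgt e0 \<notin> A \<and> (\<forall>e\<in>E - {e0}. src e \<in> A \<longleftrightarrow> tgt e \<in> A))"

lemma every_edge_separatesD:
  "every_edge_separates E src tgt \<Longrightarrow> e0 \<in> E \<Longrightarrow>
     \<exists>A. src e0 \<in> A \<and> tgt e0 \<notin> A \<and> (\<forall>e\<in>E - {e0}. src e \<in> A \<longleftrightarrow> tgt e \<in> A)"
  by (simp add: every_edge_separates_def)

lemma every_edge_separates_no_loop:
  assumes "every_edge_separates E src tgt" and "e \<in> E"
  shows "src e \<noteq> tgt e"
proof -
  obtain A where "src e \<in> A" "tgt e \<notin> A"
    using every_edge_separatesD[OF assms] by blast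
  then show ?thesis
    by auto
qed

definition graph_connected :: "'e set \<Rightarrow> ('e \<Rightarrow> 'v) \<Rightarrow> ('e \<Rightarrow> 'v) \<Rightarrow> 'v set \<Rightarrow> bool" where
  "graph_connected E src tgt S \<longleftrightarrow>
     (\<forall>A. (\<forall>e\<in>E. src e \<in> S \<longrightarrow> tgt e \<in> S \<longrightarrow> (src e \<in> A \<longleftrightarrow> tgt e \<in> A)) \<longrightarrow>
          S \<subseteq> A \<or> S \<inter> A = {})"

lemma graph_connectedD:
  "graph_connected E src tgt S \<Longrightarrow>
     (\<And>e. e \<in> E \<Longrightarrow> src e \<in> S \<Longrightarrow> tgt e \<in> S \<Longrightarrow> src e \<in> A \<longleftrightarrow> tgt e \<in> A) \<Longrightarrow>
     S \<subseteq> A \<or> S \<inter> A = {}"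
  unfolding graph_connected_def by blast

fun anchor :: "('e \<Rightarrow> 'v) \<Rightarrow> ('v, 'e) gpoint \<Rightarrow> 'v" where
  "anchor src (Vert v) = v"
| "anchor src (Mid e t) = src e"

lemma openin_realization_edge_invariant:
  assumes ends: "\<forall>e\<in>E. src e \<in> V \<and> tgt e \<in> V"
    and P: "\<forall>e\<in>E. P (src e) \<longleftrightarrow> P (tgt e)"
  shows "openin (realization V E src tgt) {x \<in> gpoints V E. P (anchor src x)}"
  unfolding openin_realization
proof (intro conjI ballI)
  fix e assume e: "e \<in> E"
  have "{0..1} \<inter> char_map src tgt e -` {x \<in> gpoints V E. P (anchor src x)}
      = (if P (src e) then {0..1} else {})"
    using P e ends by (auto simp: char_map_def gpoints_def)
  then show "openin (top_of_set {0..1::real})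
      ({0..1} \<inter> char_map src tgt e -` {x \<in> gpoints V E. P (anchor src x)})"
    by simp
qed auto

lemma tree_graph_connected:
  assumes tree: "tree_graph V E src tgt"
  shows "graph_connected E src tgt V"
  unfolding graph_connected_def
proof (intro allI impI)
  fix A assume "\<forall>e\<in>E. src e \<in> V \<longrightarrow> tgt e \<in> V \<longrightarrow> (src e \<in> A \<longleftrightarrow> tgt e \<in> A)"
  moreover have ends: "\<forall>e\<in>E. src e \<in> V \<and> tgt e \<in> V"
    and contr: "contractible_space (realization V E src tgt)"
    using tree by (auto simp: tree_graph_def)
  ultimately have A: "\<forall>e\<in>E. src e \<in> A \<longleftrightarrow> tgt e \<in> A"
    by blast
  let ?R = "realization V E src tgt"
  let ?T = "{x \<in> gpoints V E. anchor src x \<in> A}"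
  have "openin ?R ?T"
    using A by (intro openin_realization_edge_invariant[OF ends]) auto
  have "openin ?R {x \<in> gpoints V E. anchor src x \<notin> A}"
    using A by (intro openin_realization_edge_invariant[OF ends]) auto
  moreover have "?T = topspace ?R - {x \<in> gpoints V E. anchor src x \<notin> A}"
    by (auto simp: topspace_realization[OF ends])
  ultimately have "closedin ?R ?T"
    by (simp add: closedin_diff)
  moreover have "connected_space ?R"
    using contr by (simp add: contractible_imp_path_connected_space path_connected_imp_connected_space)
  ultimately have "?T = {} \<or> ?T = topspace ?R"
    using \<open>openin ?R ?T\<close> unfolding connected_space_clopen_in by blast
  moreover have "Vert v \<in> ?T \<longleftrightarrow> v \<in> A" "Vert v \<in> topspace ?R" if "v \<in> V" for v
    using that by (simp_all add: topspace_realization[OF ends] gpoints_def)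
  ultimately show "V \<subseteq> A \<or> V \<inter> A = {}"
    by blast
qed

lemma tree_every_edge_separates:
  assumes tree: "tree_graph V E src tgt"
  shows "every_edge_separates E src tgt"
  unfolding every_edge_separates_def
proof
  fix e0 assume e0: "e0 \<in> E"
  have ends: "\<forall>e\<in>E. src e \<in> V \<and> tgt e \<in> V"
    using tree by (simp add: tree_graph_def)
  let ?R' = "subtopology (realization V E src tgt) (gpoints V E - range (Mid e0))"
  define A where "A = {v. path_component_of ?R' (Vert (src e0)) (Vert v)}"
  have "src e0 \<in> A"
    using ends e0 by (auto simp: A_def path_component_of_refl topspace_realization gpoints_def)
  moreover have "tgt e0 \<notin> A"
  proof
    assume "tgt e0 \<in> A"
    then have "path_component_of ?R' (Vert (tgt e0)) (Vert (src e0))"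
      by (simp add: A_def path_component_of_sym)
    then obtain p where "pathin ?R' p" "p 0 = Vert (tgt e0)" "p 1 = Vert (src e0)"
      unfolding path_component_of_def by blast
    then show False
      using tree_no_path_around_edge[OF tree e0] by blast
  qed
  moreover have "src e \<in> A \<longleftrightarrow> tgt e \<in> A" if e: "e \<in> E - {e0}" for e
  proof -
    have "pathin (realization V E src tgt) (char_map src tgt e)"
      using continuous_map_char_map[OF ends, of e] e by (simp add: pathin_def)
    moreover have "\<forall>t\<in>{0..1}. char_map src tgt e t \<in> gpoints V E - range (Mid e0)"
      using char_map_in_gpoints[of src e V tgt E] ends e by (auto simp: char_map_def)
    ultimately have "pathin ?R' (char_map src tgt e)"
      by (simp add: pathin_subtopology)
    then have pc: "path_component_of ?R' (Vert (src e)) (Vert (tgt e))"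
      unfolding path_component_of_def by (intro exI[of _ "char_map src tgt e"]) (simp add: char_map_def)
    show ?thesis
      unfolding A_def mem_Collect_eq
      using path_component_of_trans[OF _ pc] path_component_of_trans[OF _ path_component_of_sym[OF pc]]
      by blast
  qed
  ultimately show "\<exists>A. src e0 \<in> A \<and> tgt e0 \<notin> A \<and> (\<forall>e\<in>E - {e0}. src e \<in> A \<longleftrightarrow> tgt e \<in> A)"
    by blast
qed

section \<open>Compatible choices along separating edges\<close>

lemma graph_connected_Union_chain:
  assumes "\<And>S. S \<in> C \<Longrightarrow> graph_connected E src tgt S"
    and "\<And>S T. S \<in> C \<Longrightarrow> T \<in> C \<Longrightarrow> S \<subseteq> T \<or> T \<subseteq> S"
  shows "graph_connected E src tgt (\<Union>C)"
  unfolding graph_connected_def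
proof (intro allI impI)
  fix A assume A: "\<forall>e\<in>E. src e \<in> \<Union>C \<longrightarrow> tgt e \<in> \<Union>C \<longrightarrow> (src e \<in> A \<longleftrightarrow> tgt e \<in> A)"
  have side: "S \<subseteq> A \<or> S \<inter> A = {}" if "S \<in> C" for S
    using assms(1)[OF that] by (rule graph_connectedD) (use A that in blast)
  show "\<Union>C \<subseteq> A \<or> \<Union>C \<inter> A = {}"
  proof (rule ccontr)
    assume "\<not> ?thesis"
    then obtain S T x y where ST: "S \<in> C" "T \<in> C" and "x \<in> S" "x \<notin> A" "y \<in> T" "y \<in> A"
      by blast
    then have "\<not> (S \<union> T \<subseteq> A \<or> (S \<union> T) \<inter> A = {})"
      by blast
    moreover have "S \<union> T = S \<or> S \<union> T = T"
      using assms(2)[OF ST] by blast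
    ultimately show False
      using side[OF ST(1)] side[OF ST(2)] by auto
  qed
qed

lemma graph_connected_insert:
  assumes "graph_connected E src tgt S" and "e \<in> E" and "u \<in> S"
    and "(src e = w \<and> tgt e = u) \<or> (src e = u \<and> tgt e = w)"
  shows "graph_connected E src tgt (insert w S)"
  unfolding graph_connected_def
proof (intro allI impI)
  fix A assume A: "\<forall>e\<in>E. src e \<in> insert w S \<longrightarrow> tgt e \<in> insert w S \<longrightarrow> (src e \<in> A \<longleftrightarrow> tgt e \<in> A)"
  then have "S \<subseteq> A \<or> S \<inter> A = {}"
    using assms(1) by (intro graph_connectedD) blast+
  moreover have "w \<in> A \<longleftrightarrow> u \<in> A"
    using A assms(2-4) by auto
  ultimately show "insert w S \<subseteq> A \<or> insert w S \<inter> A = {}"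
    using assms(3) by auto
qed

lemma graph_connected_unique_edge:
  assumes "graph_connected E src tgt S"
    and bridges: "every_edge_separates E src tgt"
    and "w \<notin> S" and "e1 \<in> E" "e2 \<in> E"
    and "(src e1 = w \<and> tgt e1 \<in> S) \<or> (tgt e1 = w \<and> src e1 \<in> S)"
    and "(src e2 = w \<and> tgt e2 \<in> S) \<or> (tgt e2 = w \<and> src e2 \<in> S)"
  shows "e1 = e2"
proof (rule ccontr)
  assume "e1 \<noteq> e2"
  obtain A where A: "src e1 \<in> A" "tgt e1 \<notin> A" "\<forall>e\<in>E - {e1}. src e \<in> A \<longleftrightarrow> tgt e \<in> A"
    using every_edge_separatesD[OF bridges assms(4)] by blast
  have "S \<subseteq> A \<or> S \<inter> A = {}"
    using assms(1) by (rule graph_connectedD) (use A(3) assms(3,6) in auto)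
  moreover have "src e2 \<in> A \<longleftrightarrow> tgt e2 \<in> A"
    using A(3) assms(5) \<open>e1 \<noteq> e2\<close> by blast
  ultimately show False
    using A(1,2) assms(6,7) by auto
qed

text \<open>Partial choices for the Zorn argument. Connectedness of the domain is what makes a vertex
  outside it adjacent to it along at most one edge.\<close>

definition compatible_section ::
  "'v set \<Rightarrow> 'e set \<Rightarrow> ('e \<Rightarrow> 'v) \<Rightarrow> ('e \<Rightarrow> 'v) \<Rightarrow> ('v \<Rightarrow> 'x set) \<Rightarrow> ('e \<Rightarrow> 'x \<Rightarrow> 'x \<Rightarrow> bool)
    \<Rightarrow> ('v \<times> 'x) set \<Rightarrow> bool" where
  "compatible_section V E src tgt K R P \<longleftrightarrow>
     Domain P \<subseteq> V \<and> single_valued P \<and> (\<forall>(v, x)\<in>P. x \<in> K v) \<and>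
     (\<forall>e\<in>E. \<forall>x y. (src e, x) \<in> P \<longrightarrow> (tgt e, y) \<in> P \<longrightarrow> R e x y) \<and>
     graph_connected E src tgt (Domain P)"

lemma compatible_section_Union_chain:
  assumes "C \<in> chains {P. compatible_section V E src tgt K R P}"
  shows "compatible_section V E src tgt K R (\<Union>C)"
proof -
  have sec: "\<And>P. P \<in> C \<Longrightarrow> compatible_section V E src tgt K R P"
    and chain: "\<And>P Q. P \<in> C \<Longrightarrow> Q \<in> C \<Longrightarrow> P \<subseteq> Q \<or> Q \<subseteq> P"
    using assms by (auto simp: chains_def chain_subset_def)
  have common: "\<exists>Q\<in>C. a \<in> Q \<and> b \<in> Q" if ab: "a \<in> \<Union>C" "b \<in> \<Union>C" for a b
  proof -
    obtain P Q where "P \<in> C" "Q \<in> C" "a \<in> P" "b \<in> Q"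
      using ab by blast
    then show ?thesis
      using chain[of P Q] by blast
  qed
  have "single_valued (\<Union>C)"
    unfolding single_valued_def
  proof (intro allI impI)
    fix v x y assume "(v, x) \<in> \<Union>C" "(v, y) \<in> \<Union>C"
    then obtain Q where "Q \<in> C" "(v, x) \<in> Q" "(v, y) \<in> Q"
      using common by blast
    then show "x = y"
      using sec[of Q] by (auto simp: compatible_section_def single_valued_def)
  qed
  moreover have "R e x y" if exy: "e \<in> E" "(src e, x) \<in> \<Union>C" "(tgt e, y) \<in> \<Union>C" for e x y
  proof -
    obtain Q where "Q \<in> C" "(src e, x) \<in> Q" "(tgt e, y) \<in> Q"
      using common exy(2,3) by blast
    then show ?thesis
      using sec[of Q] exy(1) by (auto simp: compatible_section_def)
  qed
  moreover have "graph_connected E src tgt (\<Union>(Domain ` C))"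
  proof (rule graph_connected_Union_chain)
    show "graph_connected E src tgt S" if "S \<in> Domain ` C" for S
      using sec that by (auto simp: compatible_section_def)
    show "S \<subseteq> T \<or> T \<subseteq> S" if "S \<in> Domain ` C" "T \<in> Domain ` C" for S T
      using that chain Domain_mono by blast
  qed
  moreover have "Domain (\<Union>C) \<subseteq> V" "\<forall>(v, x)\<in>\<Union>C. x \<in> K v"
    using sec by (fastforce simp: compatible_section_def)+
  ultimately show ?thesis
    unfolding compatible_section_def Domain_Union by blast
qed

lemma compatible_section_insert:
  assumes P: "compatible_section V E src tgt K R P"
    and w: "w \<in> V" "w \<notin> Domain P" "y \<in> K w"
    and e: "e \<in> E" "(src e = w \<and> tgt e \<in> Domain P) \<or> (tgt e = w \<and> src e \<in> Domain P)"
    and compat: "\<And>x. (src e, x) \<in> P \<Longrightarrow> R e x y" "\<And>x. (tgt e, x) \<in> P \<Longrightarrow> R e y x"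
    and unique: "\<And>e'. e' \<in> E \<Longrightarrow> (src e' = w \<and> tgt e' \<in> Domain P) \<or> (tgt e' = w \<and> src e' \<in> Domain P)
        \<Longrightarrow> e' = e"
    and loop_free: "\<And>e'. e' \<in> E \<Longrightarrow> src e' \<noteq> tgt e'"
  shows "compatible_section V E src tgt K R (insert (w, y) P)"
proof -
  have "R e' x x'"
    if e': "e' \<in> E" and ends: "(src e', x) \<in> insert (w, y) P" "(tgt e', x') \<in> insert (w, y) P"
    for e' x x'
  proof -
    consider "(src e', x) \<in> P" "(tgt e', x') \<in> P"
      | "src e' = w" "x = y" "(tgt e', x') \<in> P"
      | "(src e', x) \<in> P" "tgt e' = w" "x' = y"
      using ends loop_free[OF e'] by auto
    then show ?thesis
    proof cases
      case 1
      then show ?thesis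
        using P e' by (auto simp: compatible_section_def)
    next
      case 2
      then have "e' = e"
        using unique[OF e'] by blast
      then show ?thesis
        using 2 w(2) e(2) compat(2) by blast
    next
      case 3
      then have "e' = e"
        using unique[OF e'] by blast
      then show ?thesis
        using 3 w(2) e(2) compat(1) by blast
    qed
  qed
  moreover obtain u where "u \<in> Domain P" "(src e = w \<and> tgt e = u) \<or> (src e = u \<and> tgt e = w)"
    using e(2) by blast
  then have "graph_connected E src tgt (insert w (Domain P))"
    using P e(1) by (intro graph_connected_insert) (auto simp: compatible_section_def)
  ultimately show ?thesis
    using P w by (auto simp: compatible_section_def single_valued_def)
qed

lemma compatible_section_value_across_edge:
  assumes P: "compatible_section V E src tgt K R P"
    and ends: "src e \<in> V" "tgt e \<in> V"
    and forward: "\<And>x. x \<in> K (src e) \<Longrightarrow> \<exists>y\<in>K (tgt e). R e x y"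
    and backward: "\<And>y. y \<in> K (tgt e) \<Longrightarrow> \<exists>x\<in>K (src e). R e x y"
    and crossing: "src e \<in> Domain P \<longleftrightarrow> tgt e \<notin> Domain P"
  obtains w y where "w \<in> V" "w \<notin> Domain P" "y \<in> K w"
    "(src e = w \<and> tgt e \<in> Domain P) \<or> (tgt e = w \<and> src e \<in> Domain P)"
    "\<And>x. (src e, x) \<in> P \<Longrightarrow> R e x y" "\<And>x. (tgt e, x) \<in> P \<Longrightarrow> R e y x"
proof (cases "src e \<in> Domain P")
  case True
  then obtain x where x: "(src e, x) \<in> P"
    by blast
  then have "x \<in> K (src e)"
    using P by (auto simp: compatible_section_def)
  then obtain y where y: "y \<in> K (tgt e)" "R e x y"
    using forward by blast
  have "x' = x" if "(src e, x') \<in> P" for x'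
    using P x that by (auto simp: compatible_section_def single_valued_def)
  then show thesis
    using that[of "tgt e" y] x y ends(2) True crossing by blast
next
  case False
  then obtain x where x: "(tgt e, x) \<in> P"
    using crossing by blast
  then have "x \<in> K (tgt e)"
    using P by (auto simp: compatible_section_def)
  then obtain y where y: "y \<in> K (src e)" "R e y x"
    using backward by blast
  have "x' = x" if "(tgt e, x') \<in> P" for x'
    using P x that by (auto simp: compatible_section_def single_valued_def)
  then show thesis
    using that[of "src e" y] x y ends(1) False crossing by blast
qed

lemma compatible_section_extend:
  assumes ends: "\<forall>e\<in>E. src e \<in> V \<and> tgt e \<in> V"
    and conn: "graph_connected E src tgt V"
    and bridges: "every_edge_separates E src tgt"
    and K: "\<And>v. v \<in> V \<Longrightarrow> K v \<noteq> {}"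
    and forward: "\<And>e x. e \<in> E \<Longrightarrow> x \<in> K (src e) \<Longrightarrow> \<exists>y\<in>K (tgt e). R e x y"
    and backward: "\<And>e y. e \<in> E \<Longrightarrow> y \<in> K (tgt e) \<Longrightarrow> \<exists>x\<in>K (src e). R e x y"
    and P: "compatible_section V E src tgt K R P" and partial: "Domain P \<noteq> V"
  shows "\<exists>P'. compatible_section V E src tgt K R P' \<and> P \<subset> P'"
proof (cases "P = {}")
  case True
  obtain v x where "v \<in> V" "x \<in> K v"
    using partial K True by fastforce
  then have "compatible_section V E src tgt K R {(v, x)}"
    by (auto simp: compatible_section_def single_valued_def graph_connected_def
        dest: every_edge_separates_no_loop[OF bridges])
  then show ?thesis
    using True by blast
next
  case False
  then have "Domain P \<noteq> {}" "Domain P \<subseteq> V"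
    using P by (auto simp: compatible_section_def)
  then have "\<not> (V \<subseteq> Domain P \<or> V \<inter> Domain P = {})"
    using partial by blast
  then obtain e where e: "e \<in> E" "src e \<in> Domain P \<longleftrightarrow> tgt e \<notin> Domain P"
    using graph_connectedD[OF conn, of "Domain P"] by blast
  obtain w y where w: "w \<in> V" "w \<notin> Domain P" "y \<in> K w"
    and joins: "(src e = w \<and> tgt e \<in> Domain P) \<or> (tgt e = w \<and> src e \<in> Domain P)"
    and compat: "\<And>x. (src e, x) \<in> P \<Longrightarrow> R e x y" "\<And>x. (tgt e, x) \<in> P \<Longrightarrow> R e y x"
    using compatible_section_value_across_edge[OF P _ _ forward[OF e(1)] backward[OF e(1)] e(2)]
      ends e(1) by blast
  have "compatible_section V E src tgt K R (insert (w, y) P)"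
  proof (rule compatible_section_insert[OF P w e(1) joins compat])
    show "e' = e" if "e' \<in> E"
      "(src e' = w \<and> tgt e' \<in> Domain P) \<or> (tgt e' = w \<and> src e' \<in> Domain P)" for e'
      using graph_connected_unique_edge[OF _ bridges w(2) that(1) e(1) that(2) joins] P
      by (simp add: compatible_section_def)
  qed (use compat every_edge_separates_no_loop[OF bridges] in blast)+
  then show ?thesis
    using w(2) by blast
qed

lemma compatible_choice_exists:
  assumes ends: "\<forall>e\<in>E. src e \<in> V \<and> tgt e \<in> V"
    and conn: "graph_connected E src tgt V"
    and bridges: "every_edge_separates E src tgt"
    and K: "\<And>v. v \<in> V \<Longrightarrow> K v \<noteq> {}"
    and forward: "\<And>e x. e \<in> E \<Longrightarrow> x \<in> K (src e) \<Longrightarrow> \<exists>y\<in>K (tgt e). R e x y"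
    and backward: "\<And>e y. e \<in> E \<Longrightarrow> y \<in> K (tgt e) \<Longrightarrow> \<exists>x\<in>K (src e). R e x y"
  shows "\<exists>\<Phi>. (\<forall>v\<in>V. \<Phi> v \<in> K v) \<and> (\<forall>e\<in>E. R e (\<Phi> (src e)) (\<Phi> (tgt e)))"
proof -
  let ?S = "{P. compatible_section V E src tgt K R P}"
  have "\<forall>C\<in>chains ?S. \<exists>U\<in>?S. \<forall>X\<in>C. X \<subseteq> U"
  proof
    fix C assume "C \<in> chains ?S"
    then show "\<exists>U\<in>?S. \<forall>X\<in>C. X \<subseteq> U"
      using compatible_section_Union_chain by (intro bexI[of _ "\<Union>C"]) auto
  qed
  then obtain M where M: "compatible_section V E src tgt K R M"
    and max: "\<And>P. compatible_section V E src tgt K R P \<Longrightarrow> M \<subseteq> P \<Longrightarrow> P = M"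
    using Zorn_Lemma2[of ?S] by auto
  have "Domain M = V"
  proof (rule ccontr)
    assume "Domain M \<noteq> V"
    then obtain P where "compatible_section V E src tgt K R P" "M \<subset> P"
      using compatible_section_extend[OF assms M] by blast
    then show False
      using max by blast
  qed
  define \<Phi> where "\<Phi> v = (THE x. (v, x) \<in> M)" for v
  have mem: "(v, \<Phi> v) \<in> M" if v: "v \<in> V" for v
  proof -
    obtain x where x: "(v, x) \<in> M"
      using \<open>Domain M = V\<close> v by blast
    then have "\<Phi> v = x"
      using M unfolding \<Phi>_def compatible_section_def single_valued_def by blast
    then show ?thesis
      using x by simp
  qed
  have "\<Phi> v \<in> K v" if "v \<in> V" for v
    using mem[OF that] M unfolding compatible_section_def by blast
  moreover have "R e (\<Phi> (src e)) (\<Phi> (tgt e))" if "e \<in> E" for e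
    using mem ends that M unfolding compatible_section_def by blast
  ultimately show ?thesis
    by blast
qed

section \<open>Conjugacy classes of continuous homomorphisms\<close>

lemma continuous_map_conjugation:
  assumes TG: "topological_group G TG" and g: "g \<in> carrier G"
  shows "continuous_map TG TG (\<lambda>y. g \<otimes>\<^bsub>G\<^esub> y \<otimes>\<^bsub>G\<^esub> inv\<^bsub>G\<^esub> g)"
proof -
  have grp: "group G" and top: "topspace TG = carrier G"
    and mult: "continuous_map (prod_topology TG TG) TG (\<lambda>p. fst p \<otimes>\<^bsub>G\<^esub> snd p)"
    using TG by (auto simp: topological_group_def)
  have pair1: "continuous_map TG (prod_topology TG TG) (\<lambda>y. (g, y))"
    using g top by (intro continuous_map_pairedI) auto
  have left: "continuous_map TG TG (\<lambda>y. g \<otimes>\<^bsub>G\<^esub> y)"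
    using continuous_map_compose[OF pair1 mult] by (simp add: o_def)
  have "inv\<^bsub>G\<^esub> g \<in> carrier G"
    using grp g by (simp add: group.inv_closed)
  then have pair2: "continuous_map TG (prod_topology TG TG) (\<lambda>y. (g \<otimes>\<^bsub>G\<^esub> y, inv\<^bsub>G\<^esub> g))"
    using left top by (intro continuous_map_pairedI) auto
  show ?thesis
    using continuous_map_compose[OF pair2 mult] by (simp add: o_def)
qed

lemma hom_class_cong:
  assumes "\<And>x. x \<in> H \<Longrightarrow> \<phi> x = \<psi> x"
  shows "hom_class G H \<phi> = hom_class G H \<psi>"
  unfolding hom_class_def using assms by (metis (no_types, lifting) restrict_ext)

lemma hom_class_self:
  fixes G (structure)
  assumes "group G" and "\<phi> \<in> H \<rightarrow> carrier G" and "\<phi> \<in> extensional H"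
  shows "\<phi> \<in> hom_class G H \<phi>"
proof -
  interpret group G by fact
  have "\<phi> x \<in> carrier G" if "x \<in> H" for x
    using assms(2) that by blast
  then have "\<phi> = (\<lambda>x\<in>H. \<one> \<otimes> \<phi> x \<otimes> inv \<one>)"
    using assms(3) by (auto simp: fun_eq_iff extensional_def)
  then show ?thesis
    unfolding hom_class_def by blast
qed

lemma hom_class_eq:
  fixes G (structure)
  assumes "group G" and \<phi>: "\<phi> \<in> H \<rightarrow> carrier G" and \<psi>: "\<psi> \<in> hom_class G H \<phi>"
  shows "hom_class G H \<psi> = hom_class G H \<phi>"
proof -
  interpret group G by fact
  obtain g where g: "g \<in> carrier G" and \<psi>_def: "\<psi> = (\<lambda>x\<in>H. g \<otimes> \<phi> x \<otimes> inv g)"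
    using \<psi> by (auto simp: hom_class_def)
  have val: "\<phi> x \<in> carrier G" if "x \<in> H" for x
    using \<phi> that by blast
  have conj: "(\<lambda>x\<in>H. h \<otimes> \<psi> x \<otimes> inv h) = (\<lambda>x\<in>H. (h \<otimes> g) \<otimes> \<phi> x \<otimes> inv (h \<otimes> g))"
    if "h \<in> carrier G" for h
    using that g val by (intro restrict_ext) (simp add: \<psi>_def m_assoc inv_mult_group)
  show ?thesis
  proof
    show "hom_class G H \<psi> \<subseteq> hom_class G H \<phi>"
      unfolding hom_class_def using conj g by auto
  next
    have "(\<lambda>x\<in>H. k \<otimes> \<phi> x \<otimes> inv k) \<in> hom_class G H \<psi>" if k: "k \<in> carrier G" for k
    proof -
      have "(\<lambda>x\<in>H. k \<otimes> \<phi> x \<otimes> inv k) = (\<lambda>x\<in>H. (k \<otimes> inv g) \<otimes> \<psi> x \<otimes> inv (k \<otimes> inv g))"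
        using conj[of "k \<otimes> inv g"] k g by (simp add: m_assoc)
      moreover have "k \<otimes> inv g \<in> carrier G"
        using k g by simp
      ultimately show ?thesis
        unfolding hom_class_def by blast
    qed
    then show "hom_class G H \<phi> \<subseteq> hom_class G H \<psi>"
      unfolding hom_class_def by blast
  qed
qed

lemma hom_class_cont_homs:
  fixes G (structure)
  assumes TG: "topological_group G TG" and H: "subgroup H Gam"
    and \<phi>: "\<phi> \<in> cont_homs Gam TGam G TG H" and \<psi>: "\<psi> \<in> hom_class G H \<phi>"
  shows "\<psi> \<in> cont_homs Gam TGam G TG H"
proof -
  interpret group G
    using TG by (simp add: topological_group_def)
  obtain g where g: "g \<in> carrier G" and \<psi>_def: "\<psi> = (\<lambda>x\<in>H. g \<otimes> \<phi> x \<otimes> inv g)"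
    using \<psi> by (auto simp: hom_class_def)
  have hom: "\<phi> \<in> hom (Gam\<lparr>carrier := H\<rparr>) G" and cont: "continuous_map (subtopology TGam H) TG \<phi>"
    using \<phi> by (auto simp: cont_homs_def)
  have val: "\<phi> x \<in> carrier G" if "x \<in> H" for x
    using hom that by (auto simp: hom_def)
  have cancel: "inv g \<otimes> (g \<otimes> z) = z" if "z \<in> carrier G" for z
    using g that by (simp add: m_assoc[symmetric])
  have "\<psi> \<in> hom (Gam\<lparr>carrier := H\<rparr>) G"
    unfolding hom_def
  proof (intro CollectI conjI ballI)
    show "\<psi> \<in> carrier (Gam\<lparr>carrier := H\<rparr>) \<rightarrow> carrier G"
      using g val by (auto simp: \<psi>_def)
    fix x y assume "x \<in> carrier (Gam\<lparr>carrier := H\<rparr>)" "y \<in> carrier (Gam\<lparr>carrier := H\<rparr>)"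
    then have xy: "x \<in> H" "y \<in> H" "x \<otimes>\<^bsub>Gam\<^esub> y \<in> H"
      using H by (auto simp: subgroup.m_closed)
    moreover have "\<phi> (x \<otimes>\<^bsub>Gam\<^esub> y) = \<phi> x \<otimes> \<phi> y"
      using hom xy by (auto simp: hom_def)
    ultimately show "\<psi> (x \<otimes>\<^bsub>Gam\<lparr>carrier := H\<rparr>\<^esub> y) = \<psi> x \<otimes> \<psi> y"
      using g val by (simp add: \<psi>_def m_assoc cancel)
  qed
  moreover have "continuous_map (subtopology TGam H) TG \<psi>"
    using continuous_map_compose[OF cont continuous_map_conjugation[OF TG g]]
    by (rule continuous_map_eq) (simp add: \<psi>_def)
  ultimately show ?thesis
    by (simp add: cont_homs_def \<psi>_def)
qed

section \<open>Cells, open stars and the groupoid\<close>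

lemma cell_of_cell_pt [simp]: "cell_of (cell_pt c) = c"
  by (cases c) auto

lemma Vert_in_gpoints: "v \<in> V \<Longrightarrow> Vert v \<in> gpoints V E"
  by (simp add: gpoints_def)

lemma Mid_in_gpoints: "e \<in> E \<Longrightarrow> 0 < t \<Longrightarrow> t < 1 \<Longrightarrow> Mid e t \<in> gpoints V E"
  by (auto simp: gpoints_def)

lemma cell_pt_in_gpoints: "c \<in> cells V E \<Longrightarrow> cell_pt c \<in> gpoints V E"
  by (cases c) (auto simp: cells_def intro: Vert_in_gpoints Mid_in_gpoints)

lemma cell_of_in_cells: "a \<in> gpoints V E \<Longrightarrow> cell_of a \<in> cells V E"
  by (cases a) (auto simp: gpoints_def cells_def)

lemma fib_eq_Icell:
  assumes "cellular_groupoid Gam TGam V E src tgt I" and "a \<in> gpoints V E"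
  shows "fib I a = Icell I (cell_of a)"
proof -
  have "\<forall>a\<in>gpoints V E. \<forall>b\<in>gpoints V E. cell_of a = cell_of b \<longrightarrow> fib I a = fib I b"
    using assms(1) unfolding cellular_groupoid_def by blast
  then have "fib I a = fib I (cell_pt (cell_of a))"
    using assms(2) cell_pt_in_gpoints[OF cell_of_in_cells[OF assms(2)]] cell_of_cell_pt by blast
  then show ?thesis
    by (simp add: Icell_def)
qed

lemma subgroup_Icell:
  assumes "cellular_groupoid Gam TGam V E src tgt I" and "c \<in> cells V E"
  shows "subgroup (Icell I c) Gam"
  using assms(1) cell_pt_in_gpoints[OF assms(2)]
  unfolding cellular_groupoid_def groupoid_def Icell_def by blast

lemma openin_realization_meets_edge:
  assumes U: "openin (realization V E src tgt) U" and e: "e \<in> E"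
    and v: "v \<in> {src e, tgt e}" and "Vert v \<in> U"
  obtains t where "0 < t" "t < 1" "Mid e t \<in> U"
proof -
  define s :: real where "s = (if src e = v then 0 else 1)"
  have "s \<in> {0..1} \<inter> char_map src tgt e -` U"
    using v \<open>Vert v \<in> U\<close> by (auto simp: s_def char_map_def)
  moreover have "openin (top_of_set {0..1}) ({0..1} \<inter> char_map src tgt e -` U)"
    using U e by (simp add: openin_realization)
  ultimately obtain \<epsilon> where \<epsilon>: "\<epsilon> > 0"
    "\<forall>t\<in>{0..1}. dist t s < \<epsilon> \<longrightarrow> t \<in> {0..1} \<inter> char_map src tgt e -` U"
    unfolding openin_euclidean_subtopology_iff by blast
  define t where "t = (if s = 0 then min (\<epsilon>/2) (1/2) else max (1 - \<epsilon>/2) (1/2))"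
  have t: "0 < t" "t < 1" "dist t s < \<epsilon>"
    using \<epsilon>(1) by (auto simp: t_def s_def dist_real_def)
  then have "char_map src tgt e t \<in> U"
    using \<epsilon>(2) by simp
  then show thesis
    using that t by (simp add: char_map_def)
qed

lemma Icell_edge_subset_vertex:
  assumes ends: "\<forall>e\<in>E. src e \<in> V \<and> tgt e \<in> V"
    and I: "cellular_groupoid Gam TGam V E src tgt I"
    and e: "e \<in> E" and v: "v \<in> {src e, tgt e}"
  shows "Icell I (ECell e) \<subseteq> Icell I (VCell v)"
proof -
  let ?R = "realization V E src tgt"
  have vV: "Vert v \<in> gpoints V E"
    using ends e v by (auto simp: gpoints_def)
  have nbhd: "\<exists>W. openin ?R W \<and> Vert v \<in> W \<and> W \<subseteq> gpoints V E"
    using vV openin_topspace[of ?R] by (auto simp: topspace_realization[OF ends])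
  have lm: "locally_maximal V E src tgt I"
    using I unfolding cellular_groupoid_def by blast
  obtain U \<rho> where U: "openin ?R U" "Vert v \<in> U"
    and \<rho>: "\<forall>u\<in>U. \<rho> (0::real, u) = u \<and> \<rho> (1, u) = Vert v"
      "\<forall>t\<in>{0..1}. \<forall>u\<in>U. fib I u \<subseteq> fib I (\<rho> (t, u))"
    using lm[unfolded locally_maximal_def, rule_format, OF vV nbhd]
    by blast
  obtain t where t: "0 < t" "t < 1" "Mid e t \<in> U"
    using openin_realization_meets_edge[OF U(1) e v U(2)] .
  have "Icell I (ECell e) = fib I (Mid e t)"
    using fib_eq_Icell[OF I] e t by (simp add: gpoints_def)
  also have "\<dots> \<subseteq> Icell I (VCell v)"
    using \<rho>(1) \<rho>(2)[rule_format, of 1 "Mid e t"] t(3) vV by (simp add: fib_eq_Icell[OF I])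
  finally show ?thesis .
qed

fun star :: "'e set \<Rightarrow> ('e \<Rightarrow> 'v) \<Rightarrow> ('e \<Rightarrow> 'v) \<Rightarrow> ('v, 'e) cell \<Rightarrow> ('v, 'e) gpoint set" where
  "star E src tgt (VCell v) =
     insert (Vert v) {Mid e t | e t. e \<in> E \<and> v \<in> {src e, tgt e} \<and> 0 < t \<and> t < 1}"
| "star E src tgt (ECell e) = {Mid e t | t. 0 < t \<and> t < 1}"

lemma star_cell_of: "a \<in> gpoints V E \<Longrightarrow> a \<in> star E src tgt (cell_of a)"
  by (cases a) (auto simp: gpoints_def)

lemma openin_star:
  assumes c: "c \<in> cells V E"
  shows "openin (realization V E src tgt) (star E src tgt c)"
  unfolding openin_realization
proof (intro conjI ballI)
  show "star E src tgt c \<subseteq> gpoints V E"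
    using c by (cases c) (auto simp: cells_def intro: Vert_in_gpoints Mid_in_gpoints)
  fix e' assume e': "e' \<in> E"
  obtain S :: "real set" where "open S"
    and "{0..1} \<inter> char_map src tgt e' -` star E src tgt c = {0..1} \<inter> S"
  proof (cases c)
    case (VCell v)
    let ?S = "(if src e' = v then {..<1} else {}) \<union> (if tgt e' = v then {0<..} else {})"
    have "{0..1} \<inter> char_map src tgt e' -` star E src tgt c = {0..1} \<inter> ?S"
      using e' by (auto simp: VCell char_map_def split: if_splits)
    then show thesis
      by (rule that[rotated]) auto
  next
    case (ECell e)
    let ?S = "if e' = e then {0<..<1} else {}"
    have "{0..1} \<inter> char_map src tgt e' -` star E src tgt c = {0..1} \<inter> ?S"
      by (auto simp: ECell char_map_def)
    then show thesis
      by (rule that[rotated]) auto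
  qed
  then show "openin (top_of_set {0..1}) ({0..1} \<inter> char_map src tgt e' -` star E src tgt c)"
    by (simp add: openin_open_Int)
qed

lemma fib_subset_Icell_star:
  assumes ends: "\<forall>e\<in>E. src e \<in> V \<and> tgt e \<in> V"
    and I: "cellular_groupoid Gam TGam V E src tgt I"
    and c: "c \<in> cells V E" and a: "a \<in> star E src tgt c"
  shows "fib I a \<subseteq> Icell I c"
proof (cases c)
  case (VCell v)
  then consider "a = Vert v" | e t where "a = Mid e t" "e \<in> E" "v \<in> {src e, tgt e}" "0 < t" "t < 1"
    using a by auto
  then show ?thesis
  proof cases
    case 1
    have "v \<in> V"
      using c VCell by (auto simp: cells_def)
    then show ?thesis
      using 1 VCell fib_eq_Icell[OF I Vert_in_gpoints] by simp
  next
    case 2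
    then have "fib I a = Icell I (ECell e)"
      by (simp add: fib_eq_Icell[OF I] Mid_in_gpoints)
    then show ?thesis
      using Icell_edge_subset_vertex[OF ends I 2(2,3)] VCell by simp
  qed
next
  case (ECell e)
  then obtain t where "a = Mid e t" "0 < t" "t < 1" "e \<in> E"
    using a c by (auto simp: cells_def)
  then show ?thesis
    using ECell fib_eq_Icell[OF I Mid_in_gpoints] by simp
qed

lemma continuous_map_from_stars:
  assumes ends: "\<forall>e\<in>E. src e \<in> V \<and> tgt e \<in> V"
    and I: "I \<subseteq> topspace TGam \<times> gpoints V E"
    and \<psi>: "\<And>c. c \<in> cells V E \<Longrightarrow> continuous_map (subtopology TGam (Icell I c)) TG (\<psi> c)"
    and local: "\<And>c x a. c \<in> cells V E \<Longrightarrow> a \<in> star E src tgt c \<Longrightarrow> (x, a) \<in> I \<Longrightarrow>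
        x \<in> Icell I c \<and> \<beta> (x, a) = \<psi> c x"
  shows "continuous_map (subtopology (prod_topology TGam (realization V E src tgt)) I) TG \<beta>"
proof -
  let ?P = "prod_topology TGam (realization V E src tgt)"
  define T where "T c = (topspace TGam \<times> star E src tgt c) \<inter> I" for c
  show ?thesis
  proof (rule pasting_lemma[where I = "cells V E" and T = T and f = "\<lambda>c. \<beta>"])
    fix c assume c: "c \<in> cells V E"
    have "openin ?P (topspace TGam \<times> star E src tgt c)"
      using openin_star[OF c] by (simp add: openin_prod_Times_iff)
    then show "openin (subtopology ?P I) (T c)"
      unfolding openin_subtopology T_def by blast
    have "continuous_map (subtopology ?P (T c)) (subtopology TGam (Icell I c)) fst"
      using local[OF c] by (auto simp: continuous_map_in_subtopology T_def
          intro: continuous_map_from_subtopology continuous_map_fst)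
    then have "continuous_map (subtopology ?P (T c)) TG (\<psi> c \<circ> fst)"
      using \<psi>[OF c] by (rule continuous_map_compose)
    then have "continuous_map (subtopology ?P (T c)) TG \<beta>"
      by (rule continuous_map_eq) (use local[OF c] in \<open>auto simp: T_def\<close>)
    then show "continuous_map (subtopology (subtopology ?P I) (T c)) TG \<beta>"
      by (simp add: subtopology_subtopology T_def Int_absorb1 Int_commute)
  next
    fix p assume "p \<in> topspace (subtopology ?P I)"
    then obtain x a where "p = (x, a)" "(x, a) \<in> I"
      by auto
    then show "\<exists>c. c \<in> cells V E \<and> p \<in> T c \<and> \<beta> p = \<beta> p"
      using I star_cell_of cell_of_in_cells by (fastforce simp: T_def)
  qed auto
qed

lemma hom_cong_subgroup:
  assumes "subgroup H Gam" and "f \<in> hom (Gam\<lparr>carrier := H\<rparr>) G" and "\<And>x. x \<in> H \<Longrightarrow> g x = f x"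
  shows "g \<in> hom (Gam\<lparr>carrier := H\<rparr>) G"
  using assms unfolding hom_def by (auto simp: subgroup.m_closed)

section \<open>Representations from compatible vertex choices\<close>

lemma Rep_bar_class:
  assumes TG: "topological_group G TG" and I: "cellular_groupoid Gam TGam V E src tgt I"
    and b: "b \<in> Rep_bar Gam TGam G TG V E src tgt I" and c: "c \<in> cells V E" and \<psi>: "\<psi> \<in> b c"
  shows "\<psi> \<in> cont_homs Gam TGam G TG (Icell I c)" and "hom_class G (Icell I c) \<psi> = b c"
proof -
  obtain \<phi> where \<phi>: "\<phi> \<in> cont_homs Gam TGam G TG (Icell I c)" "b c = hom_class G (Icell I c) \<phi>"
    using b c by (auto simp: Rep_bar_def)
  show "\<psi> \<in> cont_homs Gam TGam G TG (Icell I c)"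
    using hom_class_cont_homs[OF TG subgroup_Icell[OF I c] \<phi>(1)] \<psi> \<phi>(2) by simp
  have "group G"
    using TG by (simp add: topological_group_def)
  moreover have "\<phi> \<in> Icell I c \<rightarrow> carrier G"
    using \<phi>(1) by (auto simp: cont_homs_def hom_def)
  ultimately show "hom_class G (Icell I c) \<psi> = b c"
    using hom_class_eq \<psi> \<phi>(2) by metis
qed

lemma Rep_bar_nonempty:
  assumes TG: "topological_group G TG"
    and b: "b \<in> Rep_bar Gam TGam G TG V E src tgt I" and c: "c \<in> cells V E"
  shows "b c \<noteq> {}"
proof -
  obtain \<phi> where \<phi>: "\<phi> \<in> cont_homs Gam TGam G TG (Icell I c)" "b c = hom_class G (Icell I c) \<phi>"
    using b c by (auto simp: Rep_bar_def)
  have "group G"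
    using TG by (simp add: topological_group_def)
  moreover have "\<phi> \<in> Icell I c \<rightarrow> carrier G" "\<phi> \<in> extensional (Icell I c)"
    using \<phi>(1) by (auto simp: cont_homs_def hom_def)
  ultimately show ?thesis
    using hom_class_self \<phi>(2) by blast
qed

lemma Rep_bar_vertex_section:
  assumes tree: "tree_graph V E src tgt" and TG: "topological_group G TG"
    and b: "b \<in> Rep_bar Gam TGam G TG V E src tgt I"
  obtains \<Phi> where "\<And>v. v \<in> V \<Longrightarrow> \<Phi> v \<in> b (VCell v)"
    and "\<And>e. e \<in> E \<Longrightarrow>
      restrict (\<Phi> (src e)) (Icell I (ECell e)) = restrict (\<Phi> (tgt e)) (Icell I (ECell e))"
proof -
  have ends: "\<forall>e\<in>E. src e \<in> V \<and> tgt e \<in> V"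
    using tree by (simp add: tree_graph_def)
  have edge: "b (ECell e) = (\<lambda>\<phi>. restrict \<phi> (Icell I (ECell e))) ` b (VCell v)"
    if "e \<in> E" "v \<in> {src e, tgt e}" for e v
    using b that unfolding Rep_bar_def by blast
  have "\<exists>\<Phi>. (\<forall>v\<in>V. \<Phi> v \<in> b (VCell v)) \<and>
      (\<forall>e\<in>E. restrict (\<Phi> (src e)) (Icell I (ECell e)) = restrict (\<Phi> (tgt e)) (Icell I (ECell e)))"
  proof (rule compatible_choice_exists[OF ends tree_graph_connected[OF tree]
        tree_every_edge_separates[OF tree]])
    show "b (VCell v) \<noteq> {}" if "v \<in> V" for v
      using Rep_bar_nonempty[OF TG b] that by (simp add: cells_def)
    show "\<exists>\<psi>\<in>b (VCell (tgt e)). restrict \<phi> (Icell I (ECell e)) = restrict \<psi> (Icell I (ECell e))"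
      if "e \<in> E" "\<phi> \<in> b (VCell (src e))" for e \<phi>
      using edge[OF that(1), of "src e"] edge[OF that(1), of "tgt e"] that(2) by (auto simp: image_iff)
    show "\<exists>\<phi>\<in>b (VCell (src e)). restrict \<phi> (Icell I (ECell e)) = restrict \<psi> (Icell I (ECell e))"
      if "e \<in> E" "\<psi> \<in> b (VCell (tgt e))" for e \<psi>
    proof -
      have "restrict \<psi> (Icell I (ECell e)) \<in> b (ECell e)"
        using edge[OF that(1), of "tgt e"] that(2) by blast
      then show ?thesis
        using edge[OF that(1), of "src e"] by (auto simp: image_iff)
    qed
  qed
  then show thesis
    using that by blast
qed

text \<open>On an open edge e the value is read off at \<open>src e\<close>; compatibility of \<open>\<Phi>\<close> makes the choice
  of endpoint irrelevant.\<close>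

definition vertex_rep ::
  "('e \<Rightarrow> 'v) \<Rightarrow> ('g \<times> ('v, 'e) gpoint) set \<Rightarrow> ('v \<Rightarrow> 'g \<Rightarrow> 'h) \<Rightarrow> 'g \<times> ('v, 'e) gpoint \<Rightarrow> 'h" where
  "vertex_rep src I \<Phi> = (\<lambda>p\<in>I. \<Phi> (anchor src (snd p)) (fst p))"

definition cell_hom ::
  "('e \<Rightarrow> 'v) \<Rightarrow> ('g \<times> ('v, 'e) gpoint) set \<Rightarrow> ('v \<Rightarrow> 'g \<Rightarrow> 'h) \<Rightarrow> ('v, 'e) cell \<Rightarrow> 'g \<Rightarrow> 'h" where
  "cell_hom src I \<Phi> c = restrict (\<Phi> (anchor src (cell_pt c))) (Icell I c)"

context
  fixes Gam :: "'g monoid" and TGam :: "'g topology" and G :: "'h monoid" and TG :: "'h topology"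
    and V :: "'v set" and E :: "'e set" and src tgt :: "'e \<Rightarrow> 'v"
    and I :: "('g \<times> ('v, 'e) gpoint) set"
    and b :: "('v, 'e) cell \<Rightarrow> ('g \<Rightarrow> 'h) set" and \<Phi> :: "'v \<Rightarrow> 'g \<Rightarrow> 'h"
  assumes ends: "\<forall>e\<in>E. src e \<in> V \<and> tgt e \<in> V"
    and TGam: "topological_group Gam TGam" and TG: "topological_group G TG"
    and I: "cellular_groupoid Gam TGam V E src tgt I"
    and b: "b \<in> Rep_bar Gam TGam G TG V E src tgt I"
    and \<Phi>: "\<And>v. v \<in> V \<Longrightarrow> \<Phi> v \<in> b (VCell v)"
    and \<Phi>_edge: "\<And>e. e \<in> E \<Longrightarrow>
      restrict (\<Phi> (src e)) (Icell I (ECell e)) = restrict (\<Phi> (tgt e)) (Icell I (ECell e))"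
begin

lemma cell_hom_in_Rep_bar:
  assumes c: "c \<in> cells V E"
  shows "cell_hom src I \<Phi> c \<in> b c"
proof (cases c)
  case (VCell v)
  then have "v \<in> V"
    using c by (auto simp: cells_def)
  then have "\<Phi> v \<in> extensional (Icell I c)"
    using Rep_bar_class(1)[OF TG I b c] \<Phi> VCell by (simp add: cont_homs_def)
  then show ?thesis
    using \<Phi> \<open>v \<in> V\<close> VCell by (simp add: cell_hom_def extensional_restrict)
next
  case (ECell e)
  then have "e \<in> E"
    using c by (auto simp: cells_def)
  then have "b (ECell e) = (\<lambda>\<phi>. restrict \<phi> (Icell I (ECell e))) ` b (VCell (src e))"
    using b unfolding Rep_bar_def by blast
  then show ?thesis
    using \<Phi> ends \<open>e \<in> E\<close> ECell by (simp add: cell_hom_def)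
qed

lemma vertex_rep_on_star:
  assumes c: "c \<in> cells V E" and a: "a \<in> star E src tgt c" and xa: "(x, a) \<in> I"
  shows "x \<in> Icell I c" and "vertex_rep src I \<Phi> (x, a) = cell_hom src I \<Phi> c x"
proof -
  have "x \<in> fib I a"
    using xa by (simp add: fib_def)
  then show x: "x \<in> Icell I c"
    using fib_subset_Icell_star[OF ends I c a] by blast
  show "vertex_rep src I \<Phi> (x, a) = cell_hom src I \<Phi> c x"
  proof (cases c)
    case (VCell v)
    then consider "a = Vert v" | e t where "a = Mid e t" "e \<in> E" "v \<in> {src e, tgt e}" "0 < t" "t < 1"
      using a by auto
    then show ?thesis
    proof cases
      case 1
      then show ?thesis
        using xa x VCell by (simp add: vertex_rep_def cell_hom_def)
    next
      case 2
      have "x \<in> fib I (Mid e t)"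
        using xa 2(1) by (simp add: fib_def)
      then have "x \<in> Icell I (ECell e)"
        using fib_eq_Icell[OF I Mid_in_gpoints[OF 2(2,4,5)]] by simp
      then have "\<Phi> (src e) x = \<Phi> v x"
        using \<Phi>_edge[OF 2(2)] 2(3) by (auto dest: fun_cong[where x = x])
      then show ?thesis
        using xa x VCell 2(1) by (simp add: vertex_rep_def cell_hom_def)
    qed
  next
    case (ECell e)
    then obtain t where "a = Mid e t"
      using a by auto
    then show ?thesis
      using xa x ECell by (simp add: vertex_rep_def cell_hom_def)
  qed
qed

lemma cell_hom_cont_homs:
  assumes "c \<in> cells V E"
  shows "cell_hom src I \<Phi> c \<in> cont_homs Gam TGam G TG (Icell I c)"
  using Rep_bar_class(1)[OF TG I b assms cell_hom_in_Rep_bar[OF assms]] .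

lemma cellular_rep_vertex_rep: "cellular_rep Gam TGam G TG V E src tgt I (vertex_rep src I \<Phi>)"
  unfolding cellular_rep_def
proof (intro conjI ballI allI impI)
  show "vertex_rep src I \<Phi> \<in> extensional I"
    by (simp add: vertex_rep_def)
next
  have "I \<subseteq> topspace TGam \<times> gpoints V E"
    using I TGam by (auto simp: cellular_groupoid_def groupoid_def topological_group_def)
  then show "continuous_map (subtopology (prod_topology TGam (realization V E src tgt)) I) TG
      (vertex_rep src I \<Phi>)"
    using cell_hom_cont_homs vertex_rep_on_star
    by (intro continuous_map_from_stars[OF ends]) (auto simp: cont_homs_def)
next
  fix a assume a: "a \<in> gpoints V E"
  have c: "cell_of a \<in> cells V E"
    using a by (rule cell_of_in_cells)
  have hom: "cell_hom src I \<Phi> (cell_of a) \<in> hom (Gam\<lparr>carrier := fib I a\<rparr>) G"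
    using cell_hom_cont_homs[OF c] by (simp add: cont_homs_def fib_eq_Icell[OF I a])
  have eq: "vertex_rep src I \<Phi> (x, a) = cell_hom src I \<Phi> (cell_of a) x" if "x \<in> fib I a" for x
  proof -
    have "(x, a) \<in> I"
      using that by (simp add: fib_def)
    then show ?thesis
      by (rule vertex_rep_on_star(2)[OF c star_cell_of[OF a]])
  qed
  have "subgroup (fib I a) Gam"
    using subgroup_Icell[OF I c] by (simp add: fib_eq_Icell[OF I a])
  then show "(\<lambda>x. vertex_rep src I \<Phi> (x, a)) \<in> hom (Gam\<lparr>carrier := fib I a\<rparr>) G"
    using hom eq by (rule hom_cong_subgroup)
next
  fix a a' x assume a: "a \<in> gpoints V E" and a': "a' \<in> gpoints V E"
    and same: "cell_of a = cell_of a'" and x: "x \<in> fib I a"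
  have "x \<in> fib I a'"
    using x same fib_eq_Icell[OF I a] fib_eq_Icell[OF I a'] by simp
  then show "vertex_rep src I \<Phi> (x, a) = vertex_rep src I \<Phi> (x, a')"
    using vertex_rep_on_star(2)[OF cell_of_in_cells[OF a] star_cell_of[OF a], of x]
      vertex_rep_on_star(2)[OF cell_of_in_cells[OF a'] star_cell_of[OF a'], of x] x same
    by (simp add: fib_def)
qed

lemma kappa_rep_vertex_rep_class:
  assumes \<beta>: "\<beta> \<in> rep_class G I (vertex_rep src I \<Phi>)"
  shows "kappa_rep G V E I \<beta> = b"
proof
  fix c
  show "kappa_rep G V E I \<beta> c = b c"
  proof (cases "c \<in> cells V E")
    case False
    then show ?thesis
      using b by (simp add: kappa_rep_def Rep_bar_def extensional_def)
  next
    case c: True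
    have grp: "group G"
      using TG by (simp add: topological_group_def)
    obtain g where g: "g \<in> carrier G"
      and \<beta>_def: "\<beta> = (\<lambda>p\<in>I. g \<otimes>\<^bsub>G\<^esub> vertex_rep src I \<Phi> p \<otimes>\<^bsub>G\<^esub> inv\<^bsub>G\<^esub> g)"
      using \<beta> by (auto simp: rep_class_def)
    have "cell_pt c \<in> star E src tgt c"
      using star_cell_of[OF cell_pt_in_gpoints[OF c]] by simp
    then have "hom_class G (Icell I c) (\<lambda>x. \<beta> (x, cell_pt c))
        = hom_class G (Icell I c) (\<lambda>x\<in>Icell I c. g \<otimes>\<^bsub>G\<^esub> cell_hom src I \<Phi> c x \<otimes>\<^bsub>G\<^esub> inv\<^bsub>G\<^esub> g)"
      using vertex_rep_on_star(2)[OF c] by (intro hom_class_cong) (simp add: \<beta>_def Icell_def fib_def)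
    also have "\<dots> = hom_class G (Icell I c) (cell_hom src I \<Phi> c)"
      using cell_hom_cont_homs[OF c] g
      by (intro hom_class_eq[OF grp]) (auto simp: cont_homs_def hom_def hom_class_def)
    also have "\<dots> = b c"
      using Rep_bar_class(2)[OF TG I b c cell_hom_in_Rep_bar[OF c]] .
    finally show ?thesis
      using c by (simp add: kappa_rep_def)
  qed
qed

end

theorem lemma5p14:
  fixes Gam :: "'g monoid" and TGam :: "'g topology"
    and G :: "'h monoid" and TG :: "'h topology"
    and V :: "'v set" and E :: "'e set" and src tgt :: "'e \<Rightarrow> 'v"
    and I :: "('g \<times> ('v,'e) gpoint) set"
  assumes "topological_group Gam TGam"
    and "topological_group G TG"
    and "tree_graph V E src tgt"
    and "cellular_groupoid Gam TGam V E src tgt I"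
  shows "Rep_bar Gam TGam G TG V E src tgt I
           \<subseteq> kappa G V E I ` Rep_cellular Gam TGam G TG V E src tgt I"
proof
  fix b assume b: "b \<in> Rep_bar Gam TGam G TG V E src tgt I"
  have ends: "\<forall>e\<in>E. src e \<in> V \<and> tgt e \<in> V"
    using assms(3) by (simp add: tree_graph_def)
  obtain \<Phi> where \<Phi>: "\<And>v. v \<in> V \<Longrightarrow> \<Phi> v \<in> b (VCell v)"
    and \<Phi>_edge: "\<And>e. e \<in> E \<Longrightarrow>
      restrict (\<Phi> (src e)) (Icell I (ECell e)) = restrict (\<Phi> (tgt e)) (Icell I (ECell e))"
    using Rep_bar_vertex_section[OF assms(3,2) b] by blast
  let ?\<beta> = "vertex_rep src I \<Phi>"
  have rep: "rep_class G I ?\<beta> \<in> Rep_cellular Gam TGam G TG V E src tgt I"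
    using cellular_rep_vertex_rep[OF ends assms(1,2,4) b \<Phi> \<Phi>_edge] by (simp add: Rep_cellular_def)
  have "rep_class G I ?\<beta> \<noteq> {}"
    using assms(2) by (auto simp: rep_class_def topological_group_def
        intro: monoid.one_closed group.is_monoid)
  then have "kappa_rep G V E I ` rep_class G I ?\<beta> = {b}"
    using kappa_rep_vertex_rep_class[OF ends assms(1,2,4) b \<Phi> \<Phi>_edge] by blast
  then have "kappa G V E I (rep_class G I ?\<beta>) = b"
    by (simp add: kappa_def)
  with rep show "b \<in> kappa G V E I ` Rep_cellular Gam TGam G TG V E src tgt I"
    by (metis image_eqI)
qed

end
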